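(* Let $k>1$, $F=F(a_1,\dots,a_k)$, let $0<\lambda<1/3$ and let $\tau$ be a nontrivial relabeling automorphism of $F$. Let $S'(\lambda,\tau)$ be the set of all cyclically reduced words $x$ such that $x$ and some cyclic permutation of $\tau(x^{-1})$ have a common initial segment of length $\ge\lambda|x|$. Then $S'(\lambda,\tau)$ is exponentially $CR$-negligible.
   Context: $A_{2k}=\{a_1^{\pm1},\dots,a_k^{\pm1}\}$; $F$ is identified with the set of freely reduced words over $A_{2k}$, and $CR\subseteq F$ is the set of cyclically reduced words. An automorphism $\tau$ of $F$ is a relabeling automorphism if its restriction to $A_{2k}$ is a permutation of $A_{2k}$. For $S\subseteq F$, $\rho(n,S)$ is the number of $x\in S$ with $|x|\le n$. For $S\subseteq Q\subseteq F$, $S$ is exponentially $Q$-generic if there are $C>0$ and $0<\sigma<1$ with $|\rho(n,S)/\rho(n,Q)-1|\le C\sigma^n$ for all $n$; $S$ is exponentially $Q$-negligible if $Q\setminus S$ is exponentially $Q$-generic. *)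

theory Defs
  imports Complex_Main
begin

text \<open>Alphabet A_{2k}: the letter a_i is encoded as the integer i, and a_i^{-1} as -i
  (1 \<le> i \<le> k). Formal inversion of a letter is integer negation.\<close>

definition alph :: "nat \<Rightarrow> int set" where
  "alph k = {i. i \<noteq> 0 \<and> \<bar>i\<bar> \<le> int k}"

definition freely_reduced :: "int list \<Rightarrow> bool" where
  "freely_reduced w \<longleftrightarrow> (\<forall>i. Suc i < length w \<longrightarrow> w ! Suc i \<noteq> - (w ! i))"

definition FG :: "nat \<Rightarrow> int list set" where
  "FG k = {w. set w \<subseteq> alph k \<and> freely_reduced w}"

definition CR :: "nat \<Rightarrow> int list set" where
  "CR k = {w \<in> FG k. w = [] \<or> last w \<noteq> - hd w}"

fun red :: "int list \<Rightarrow> int list" where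
  "red [] = []"
| "red (a # w) = (case red w of [] \<Rightarrow> [a] | b # v \<Rightarrow> if b = - a then v else a # b # v)"

definition fmult :: "int list \<Rightarrow> int list \<Rightarrow> int list" where
  "fmult x y = red (x @ y)"

definition finv :: "int list \<Rightarrow> int list" where
  "finv x = rev (map uminus x)"

definition group_aut :: "nat \<Rightarrow> (int list \<Rightarrow> int list) \<Rightarrow> bool" where
  "group_aut k \<tau> \<longleftrightarrow> bij_betw \<tau> (FG k) (FG k) \<and>
     (\<forall>x\<in>FG k. \<forall>y\<in>FG k. \<tau> (fmult x y) = fmult (\<tau> x) (\<tau> y))"

definition relabeling_aut :: "nat \<Rightarrow> (int list \<Rightarrow> int list) \<Rightarrow> bool" where
  "relabeling_aut k \<tau> \<longleftrightarrow> group_aut k \<tau> \<and>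
     (\<exists>\<pi>. bij_betw \<pi> (alph k) (alph k) \<and> (\<forall>a\<in>alph k. \<tau> [a] = [\<pi> a]))"

definition rho :: "nat \<Rightarrow> int list set \<Rightarrow> real" where
  "rho n S = real (card {x\<in>S. length x \<le> n})"

definition exp_generic :: "int list set \<Rightarrow> int list set \<Rightarrow> bool" where
  "exp_generic S Q \<longleftrightarrow> S \<subseteq> Q \<and>
     (\<exists>C::real. \<exists>\<sigma>::real. C > 0 \<and> 0 < \<sigma> \<and> \<sigma> < 1 \<and>
        (\<forall>n. \<bar>rho n S / rho n Q - 1\<bar> \<le> C * \<sigma> ^ n))"

definition exp_negligible :: "int list set \<Rightarrow> int list set \<Rightarrow> bool" where
  "exp_negligible S Q \<longleftrightarrow> S \<subseteq> Q \<and> exp_generic (Q - S) Q"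

definition Sprime :: "nat \<Rightarrow> real \<Rightarrow> (int list \<Rightarrow> int list) \<Rightarrow> int list set" where
  "Sprime k lam \<tau> = {x \<in> CR k. \<exists>j m. real m \<ge> lam * real (length x) \<and>
      m \<le> length x \<and> take m x = take m (rotate j (\<tau> (finv x)))}"

end

theory Submission
  imports Defs
begin

(* A relabeling automorphism acts letterwise, tau = map pi.  So if x in S' has length l, then for
   some shift j its first m >= lam * l letters satisfy  x ! i = pi (- x ! r i),  where
   r i = l - 1 - (i + j) mod l  is an involution of the positions with at most two fixed points.
   Hence at least m/2 - 1 letters of x are determined by the letters before them, and a reduced
   word of length l with d determined letters can be chosen in at most 2 (2k-1)^(l-d) ways.
   Summing over j < l and l <= n bounds rho(n, S') by O(n^2 (2k-1)^((1 - lam/2) n)), while CR has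
   at least (2k-1)^(n-2) words of length n, so the ratio decays like n^2 (2k-1)^(-lam n/2). *)

lemma freely_reduced_Nil [simp]: "freely_reduced []"
  by (simp add: freely_reduced_def)

lemma freely_reduced_Cons:
  "freely_reduced (a # w) \<longleftrightarrow> freely_reduced w \<and> (w \<noteq> [] \<longrightarrow> hd w \<noteq> - a)"
  unfolding freely_reduced_def by (cases w) (auto simp: nth_Cons split: nat.splits)

lemma freely_reduced_snoc:
  "freely_reduced (w @ [c]) \<longleftrightarrow> freely_reduced w \<and> (w \<noteq> [] \<longrightarrow> c \<noteq> - last w)"
  by (induction w) (auto simp: freely_reduced_Cons)

lemma uminus_in_alph: "a \<in> alph k \<Longrightarrow> - a \<in> alph k"
  by (simp add: alph_def)

lemma alph_eq: "alph k = {1..int k} \<union> {- int k..-1}"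
  by (auto simp: alph_def)

lemma finite_alph [simp]: "finite (alph k)"
  by (simp add: alph_eq)

lemma card_alph: "card (alph k) = 2 * k"
proof -
  have "card ({1..int k} \<union> {- int k..-1}) = card {1..int k} + card {- int k..-1}"
    by (rule card_Un_disjoint) auto
  then show ?thesis by (simp add: alph_eq)
qed

lemma finite_FG_length_le: "finite {x \<in> FG k. length x \<le> n}"
proof (rule finite_subset)
  show "{x \<in> FG k. length x \<le> n} \<subseteq> {x. set x \<subseteq> alph k \<and> length x \<le> n}"
    by (auto simp: FG_def)
  show "finite {x. set x \<subseteq> alph k \<and> length x \<le> n}"
    by (rule finite_lists_length_le) simp
qed

lemma finite_subset_FG_length:
  "X \<subseteq> {x \<in> FG k. length x = n} \<Longrightarrow> finite X"
  by (rule finite_subset[OF _ finite_FG_length_le[of k n]]) auto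

lemma length_finv [simp]: "length (finv x) = length x"
  by (simp add: finv_def)

lemma freely_reduced_finv: "freely_reduced x \<Longrightarrow> freely_reduced (finv x)"
proof (induction x)
  case (Cons a x)
  have "finv (a # x) = finv x @ [- a]" by (simp add: finv_def)
  moreover have "x \<noteq> [] \<Longrightarrow> last (finv x) = - hd x"
    by (simp add: finv_def last_rev hd_map)
  ultimately show ?case
    using Cons by (auto simp: freely_reduced_Cons freely_reduced_snoc finv_def)
qed (simp add: finv_def)

lemma finv_in_FG: "x \<in> FG k \<Longrightarrow> finv x \<in> FG k"
  using freely_reduced_finv by (auto simp: FG_def finv_def alph_def)

section \<open>Relabeling automorphisms act letterwise\<close>

lemma red_freely_reduced: "freely_reduced w \<Longrightarrow> red w = w"
  by (induction w) (auto simp: freely_reduced_Cons split: list.splits)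

lemma fmult_Cons: "freely_reduced (a # w) \<Longrightarrow> fmult [a] w = a # w"
  by (metis append_Cons append_Nil fmult_def red_freely_reduced)

lemma freely_reduced_map:
  assumes "set w \<subseteq> alph k" "freely_reduced w" "inj_on \<pi> (alph k)"
    and "\<forall>a\<in>alph k. \<pi> (- a) = - \<pi> a"
  shows "freely_reduced (map \<pi> w)"
  using assms(1,2)
proof (induction w)
  case (Cons a w)
  have "\<pi> (hd w) \<noteq> - \<pi> a" if "w \<noteq> []"
  proof
    assume "\<pi> (hd w) = - \<pi> a"
    moreover have "hd w \<in> alph k" "a \<in> alph k" using Cons.prems that by (cases w; auto)+
    ultimately have "hd w = - a"
      using assms(3,4) uminus_in_alph by (metis inj_on_def)
    then show False using Cons.prems that by (simp add: freely_reduced_Cons)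
  qed
  with Cons show ?case by (auto simp: freely_reduced_Cons hd_map)
qed simp

lemma group_aut_Nil:
  assumes "group_aut k \<tau>"
  shows "\<tau> [] = []"
proof -
  from assms have bij: "bij_betw \<tau> (FG k) (FG k)"
    and hom: "\<forall>x\<in>FG k. \<forall>y\<in>FG k. \<tau> (fmult x y) = fmult (\<tau> x) (\<tau> y)"
    unfolding group_aut_def by blast+
  have reduced: "x \<in> FG k \<Longrightarrow> red x = x" for x
    by (simp add: FG_def red_freely_reduced)
  have Nil_FG: "[] \<in> FG k" by (simp add: FG_def)
  obtain y where y: "y \<in> FG k" "\<tau> y = []"
    using bij Nil_FG by (metis bij_betw_iff_bijections)
  have "\<tau> y = fmult (\<tau> []) (\<tau> y)"
    using hom y Nil_FG by (metis append_Nil fmult_def reduced)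
  moreover have "\<tau> [] \<in> FG k" using bij Nil_FG by (meson bij_betwE)
  ultimately show ?thesis using y reduced by (simp add: fmult_def)
qed

lemma relabeling_aut_letterwise:
  assumes "relabeling_aut k \<tau>"
  obtains \<pi> where "bij_betw \<pi> (alph k) (alph k)" and "\<forall>x\<in>FG k. \<tau> x = map \<pi> x"
proof -
  from assms obtain \<pi> where aut: "group_aut k \<tau>"
    and \<pi>: "bij_betw \<pi> (alph k) (alph k)" and letter: "\<forall>a\<in>alph k. \<tau> [a] = [\<pi> a]"
    unfolding relabeling_aut_def by blast
  have hom: "\<forall>x\<in>FG k. \<forall>y\<in>FG k. \<tau> (fmult x y) = fmult (\<tau> x) (\<tau> y)"
    using aut unfolding group_aut_def by blast
  have letter_FG: "a \<in> alph k \<Longrightarrow> [a] \<in> FG k" for a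
    by (simp add: FG_def freely_reduced_def)
  have inverse: "\<forall>a\<in>alph k. \<pi> (- a) = - \<pi> a"
  proof
    fix a assume a: "a \<in> alph k"
    then have "\<tau> (fmult [a] [- a]) = fmult [\<pi> a] [\<pi> (- a)]"
      using hom letter letter_FG uminus_in_alph by metis
    then have "red [\<pi> a, \<pi> (- a)] = []" using group_aut_Nil[OF aut] by (simp add: fmult_def)
    then show "\<pi> (- a) = - \<pi> a" by (simp split: if_splits)
  qed
  have "\<tau> x = map \<pi> x" if "x \<in> FG k" for x
    using that
  proof (induction x)
    case (Cons a w)
    then have a: "a \<in> alph k" and w: "w \<in> FG k" and fr: "freely_reduced (a # w)"
      by (auto simp: FG_def freely_reduced_Cons)
    have "\<tau> (a # w) = fmult [\<pi> a] (map \<pi> w)"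
      using hom letter_FG[OF a] w letter a Cons.IH fmult_Cons[OF fr] by metis
    also have "\<dots> = \<pi> a # map \<pi> w"
      using freely_reduced_map[of "a # w" k \<pi>] Cons.prems fr \<pi> inverse
      by (simp add: FG_def bij_betw_def fmult_Cons)
    finally show ?case by simp
  qed (simp add: group_aut_Nil[OF aut])
  with \<pi> that show ?thesis by blast
qed

section \<open>Counting reduced words letter by letter\<close>

lemma card_take_Suc_le:
  assumes "finite X" and "\<forall>x\<in>X. t < length x"
    and "\<And>u. u \<in> take t ` X \<Longrightarrow> card {x ! t | x. x \<in> X \<and> take t x = u} \<le> b"
  shows "card (take (Suc t) ` X) \<le> b * card (take t ` X)"
proof -
  define next_letters where "next_letters u = {x ! t | x. x \<in> X \<and> take t x = u}" for u
  have fin: "finite (next_letters u)" for u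
    using assms(1) by (simp add: next_letters_def)
  have "take (Suc t) ` X \<subseteq> (\<Union>u\<in>take t ` X. (\<lambda>c. u @ [c]) ` next_letters u)"
    using assms(2) by (force simp: take_Suc_conv_app_nth next_letters_def)
  then have "card (take (Suc t) ` X) \<le> card (\<Union>u\<in>take t ` X. (\<lambda>c. u @ [c]) ` next_letters u)"
    by (intro card_mono) (simp_all add: assms(1) fin)
  also have "\<dots> \<le> (\<Sum>u\<in>take t ` X. card ((\<lambda>c. u @ [c]) ` next_letters u))"
    by (rule card_UN_le) (simp add: assms(1))
  also have "\<dots> \<le> (\<Sum>u\<in>take t ` X. b)"
  proof (rule sum_mono)
    fix u assume "u \<in> take t ` X"
    have "card ((\<lambda>c. u @ [c]) ` next_letters u) \<le> card (next_letters u)"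
      by (rule card_image_le[OF fin])
    also have "\<dots> \<le> b" using assms(3)[OF \<open>u \<in> take t ` X\<close>] by (simp add: next_letters_def)
    finally show "card ((\<lambda>c. u @ [c]) ` next_letters u) \<le> b" .
  qed
  finally show ?thesis by (simp add: mult.commute)
qed

lemma card_next_letters_le:
  assumes X: "X \<subseteq> {x \<in> FG k. length x = n}" and "t < n" and "u \<in> take t ` X"
  shows "card {x ! t | x. x \<in> X \<and> take t x = u} \<le> (if t = 0 then 2 * k else 2 * k - 1)"
proof (cases t)
  case 0
  have "{x ! t | x. x \<in> X \<and> take t x = u} \<subseteq> alph k"
    using X \<open>t < n\<close> nth_mem by (fastforce simp: FG_def)
  then show ?thesis using 0 card_mono[OF finite_alph] by (fastforce simp: card_alph)
next
  case (Suc s)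
  have last_prefix: "last u = x ! s" if "x \<in> X" "take t x = u" for x
  proof -
    have "u = take s x @ [x ! s]"
      using that X \<open>t < n\<close> Suc by (auto simp: take_Suc_conv_app_nth)
    then show ?thesis by simp
  qed
  have letters: "{x ! t | x. x \<in> X \<and> take t x = u} \<subseteq> alph k - {- last u}"
  proof
    fix c assume "c \<in> {x ! t | x. x \<in> X \<and> take t x = u}"
    then obtain x where x: "x \<in> X" "take t x = u" "c = x ! t" by blast
    then have "set x \<subseteq> alph k" "freely_reduced x" "length x = n" using X by (auto simp: FG_def)
    then show "c \<in> alph k - {- last u}"
      using x last_prefix[OF x(1,2)] \<open>t < n\<close> Suc by (auto simp: freely_reduced_def)
  qed
  moreover have "- last u \<in> alph k"
  proof -
    obtain x where x: "x \<in> X" "take t x = u" using \<open>u \<in> take t ` X\<close> by blast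
    then have "x ! s \<in> alph k" using X \<open>t < n\<close> Suc nth_mem by (fastforce simp: FG_def)
    then show ?thesis using last_prefix[OF x] uminus_in_alph by simp
  qed
  ultimately show ?thesis
    using Suc card_mono[OF _ letters] by (simp add: card_alph)
qed

lemma card_take_Suc_determined_le:
  assumes "finite X" and "\<forall>x\<in>X. t < length x" and "\<forall>x\<in>X. x ! t = f (take t x)"
  shows "card (take (Suc t) ` X) \<le> card (take t ` X)"
proof -
  have "card (take (Suc t) ` X) \<le> 1 * card (take t ` X)"
  proof (rule card_take_Suc_le[OF assms(1,2)])
    fix u
    have "{x ! t | x. x \<in> X \<and> take t x = u} \<subseteq> {f u}" using assms(3) by auto
    then show "card {x ! t | x. x \<in> X \<and> take t x = u} \<le> 1"
      using card_mono[of "{f u}"] by simp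
  qed
  then show ?thesis by simp
qed

lemma card_reduced_words_determined:
  assumes "k \<ge> 1" and X: "X \<subseteq> {x \<in> FG k. length x = n}" and D: "D \<subseteq> {..<n}"
    and determined: "\<And>t. t \<in> D \<Longrightarrow> \<exists>f. \<forall>x\<in>X. x ! t = f (take t x)"
  shows "card X * (2 * k - 1) ^ card D \<le> 2 * (2 * k - 1) ^ n"
proof -
  define q where "q = 2 * k - 1"
  have fin: "finite X" using X by (rule finite_subset_FG_length)
  have card_take_0: "card (take 0 ` X) \<le> 1"
    using card_mono[of "{[]}" "take 0 ` X"] by auto
  have "card (take t ` X) * q ^ card (D \<inter> {..<t}) \<le> 2 * q ^ t" if "t \<le> n" for t
    using that
  proof (induction t)
    case (Suc t)
    then have IH: "card (take t ` X) * q ^ card (D \<inter> {..<t}) \<le> 2 * q ^ t" by simp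
    have lengths: "\<forall>x\<in>X. t < length x" using X Suc.prems by auto
    have free_step: "card (take (Suc t) ` X) \<le> (if t = 0 then 2 * k else q) * card (take t ` X)"
      unfolding q_def using Suc.prems
      by (intro card_take_Suc_le[OF fin lengths] card_next_letters_le[OF X]) simp_all
    consider (determined) "t \<in> D" | (first) "t \<notin> D" "t = 0" | (free) "t \<notin> D" "t \<noteq> 0"
      by blast
    then show ?case
    proof cases
      case determined
      then obtain f where "\<forall>x\<in>X. x ! t = f (take t x)" using assms(4) by blast
      then have "card (take (Suc t) ` X) \<le> card (take t ` X)"
        by (rule card_take_Suc_determined_le[OF fin lengths])
      moreover have "D \<inter> {..<Suc t} = insert t (D \<inter> {..<t})" using determined by auto
      then have "card (D \<inter> {..<Suc t}) = Suc (card (D \<inter> {..<t}))" by simp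
      ultimately have "card (take (Suc t) ` X) * q ^ card (D \<inter> {..<Suc t})
          \<le> card (take t ` X) * q ^ card (D \<inter> {..<t}) * q"
        by simp
      also have "\<dots> \<le> 2 * q ^ Suc t" using IH by simp
      finally show ?thesis .
    next
      case first
      then have "card (take (Suc t) ` X) \<le> 2 * k * card (take 0 ` X)" using free_step by simp
      also have "\<dots> \<le> 2 * k" using card_take_0 by simp
      also have "\<dots> \<le> 2 * q" using assms(1) by (simp add: q_def)
      finally have "card (take (Suc t) ` X) \<le> 2 * q" .
      moreover have "D \<inter> {..<Suc t} = {}" using first by auto
      ultimately show ?thesis using first by simp
    next
      case free
      then have "D \<inter> {..<Suc t} = D \<inter> {..<t}" by (auto simp: less_Suc_eq)
      then have "card (take (Suc t) ` X) * q ^ card (D \<inter> {..<Suc t})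
          \<le> card (take t ` X) * q ^ card (D \<inter> {..<t}) * q"
        using free_step free by (simp add: mult.commute mult.left_commute)
      also have "\<dots> \<le> 2 * q ^ Suc t" using IH by simp
      finally show ?thesis .
    qed
  qed (use card_take_0 in simp)
  then have "card (take n ` X) * q ^ card (D \<inter> {..<n}) \<le> 2 * q ^ n" by simp
  moreover have "take n ` X = X" using X by (force simp: image_iff)
  moreover have "D \<inter> {..<n} = D" using D by auto
  ultimately show ?thesis by (simp add: q_def)
qed

lemma card_FG_length_hd_ge:
  assumes "a \<in> alph k"
  shows "(2 * k - 1) ^ t \<le> card {w \<in> FG k. length w = Suc t \<and> hd w = a}"
proof (induction t)
  case 0
  have "[a] \<in> {w \<in> FG k. length w = Suc 0 \<and> hd w = a}"
    using assms by (simp add: FG_def freely_reduced_def)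
  moreover have "finite {w \<in> FG k. length w = Suc 0 \<and> hd w = a}"
    by (rule finite_subset_FG_length) auto
  ultimately have "card {w \<in> FG k. length w = Suc 0 \<and> hd w = a} \<noteq> 0"
    by (metis card_0_eq empty_iff)
  then show ?case by simp
next
  case (Suc t)
  define R where "R = {w \<in> FG k. length w = Suc t \<and> hd w = a}"
  define E where "E u = alph k - {- last u}" for u
  have finR: "finite R" unfolding R_def by (rule finite_subset_FG_length) auto
  have card_E: "card (E u) = 2 * k - 1" if "u \<in> R" for u
  proof -
    have "u \<noteq> []" "set u \<subseteq> alph k" using that by (auto simp: R_def FG_def)
    then have "- last u \<in> alph k" by (simp add: uminus_in_alph subset_iff)
    then show ?thesis by (simp add: E_def card_alph)
  qed
  have "(2 * k - 1) ^ Suc t \<le> card R * (2 * k - 1)"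
    using Suc.IH by (simp add: R_def mult.commute)
  also have "\<dots> = card (Sigma R E)"
    using finR card_E by (simp add: card_SigmaI E_def)
  also have "\<dots> = card ((\<lambda>(u, c). u @ [c]) ` Sigma R E)"
    by (rule card_image[symmetric]) (auto simp: inj_on_def)
  also have "\<dots> \<le> card {w \<in> FG k. length w = Suc (Suc t) \<and> hd w = a}"
  proof (rule card_mono)
    show "finite {w \<in> FG k. length w = Suc (Suc t) \<and> hd w = a}"
      by (rule finite_subset_FG_length) auto
    show "(\<lambda>(u, c). u @ [c]) ` Sigma R E \<subseteq> {w \<in> FG k. length w = Suc (Suc t) \<and> hd w = a}"
      by (auto simp: R_def E_def FG_def freely_reduced_snoc hd_append)
  qed
  finally show ?case .
qed

lemma card_CR_length_ge:
  assumes "k \<ge> 2" and "n \<ge> 2"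
  shows "(2 * k - 1) ^ (n - 2) \<le> card {x \<in> CR k. length x = n}"
proof -
  define R where "R = {w \<in> FG k. length w = Suc (n - 2) \<and> hd w = 1}"
  have "alph k - {- last w, -1} \<noteq> {}" for w
  proof -
    have "card (alph k) - card {- last w, -1} \<le> card (alph k - {- last w, -1})"
      by (rule diff_card_le_card_Diff) simp
    moreover have "card {- last w, -1::int} \<le> 2" by (simp add: card_insert_le_m1)
    ultimately have "0 < card (alph k - {- last w, -1})" using assms(1) by (simp add: card_alph)
    then show ?thesis by (metis card.empty less_irrefl)
  qed
  then obtain closing where closing: "\<And>w. closing w \<in> alph k - {- last w, -1}"
    by (meson all_not_in_conv)
  have "(2 * k - 1) ^ (n - 2) \<le> card R"
    unfolding R_def by (rule card_FG_length_hd_ge) (use assms(1) in \<open>simp add: alph_def\<close>)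
  also have "\<dots> = card ((\<lambda>w. w @ [closing w]) ` R)"
    by (rule card_image[symmetric]) (auto simp: inj_on_def)
  also have "\<dots> \<le> card {x \<in> CR k. length x = n}"
  proof (rule card_mono)
    show "finite {x \<in> CR k. length x = n}"
      by (rule finite_subset_FG_length[of _ k n]) (auto simp: CR_def)
    show "(\<lambda>w. w @ [closing w]) ` R \<subseteq> {x \<in> CR k. length x = n}"
    proof (rule image_subsetI)
      fix w assume "w \<in> R"
      then have "w \<in> FG k" "w \<noteq> []" "length w = n - 1" "hd w = 1"
        using assms(2) by (auto simp: R_def)
      then show "w @ [closing w] \<in> {x \<in> CR k. length x = n}"
        using closing[of w] assms(2) by (auto simp: CR_def FG_def freely_reduced_snoc hd_append)
    qed
  qed
  finally show ?thesis .
qed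

lemma rho_CR_ge:
  assumes "k \<ge> 2"
  shows "real (2 * k - 1) ^ n \<le> real (2 * k - 1) ^ 2 * rho n (CR k)"
proof -
  define q where "q = 2 * k - 1"
  have q: "q \<ge> 3" using assms by (simp add: q_def)
  have fin: "finite {x \<in> CR k. length x \<le> n}"
    by (rule finite_subset[OF _ finite_FG_length_le[of k n]]) (auto simp: CR_def)
  have "q ^ n \<le> q ^ 2 * card {x \<in> CR k. length x \<le> n}"
  proof (cases "n \<ge> 2")
    case True
    have "q ^ n = q ^ 2 * q ^ (n - 2)" using True by (metis le_add_diff_inverse power_add)
    also have "\<dots> \<le> q ^ 2 * card {x \<in> CR k. length x = n}"
      using card_CR_length_ge[OF assms True] by (simp add: q_def)
    also have "\<dots> \<le> q ^ 2 * card {x \<in> CR k. length x \<le> n}"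
      by (intro mult_le_mono2 card_mono[OF fin]) auto
    finally show ?thesis .
  next
    case False
    have "[] \<in> {x \<in> CR k. length x \<le> n}" by (simp add: CR_def FG_def)
    then have "1 \<le> card {x \<in> CR k. length x \<le> n}"
      using fin by (metis One_nat_def Suc_leI card_gt_0_iff empty_iff)
    moreover have "q ^ n \<le> q ^ 2" using False q by (intro power_increasing) auto
    ultimately show ?thesis by (metis le_trans mult.right_neutral mult_le_mono2)
  qed
  then show ?thesis unfolding rho_def q_def by (metis of_nat_le_iff of_nat_mult of_nat_power)
qed

lemma rho_le_sum_card_length: "rho n S \<le> (\<Sum>l\<le>n. real (card {x \<in> S. length x = l}))"
proof -
  have "{x \<in> S. length x \<le> n} = (\<Union>l\<le>n. {x \<in> S. length x = l})" by auto
  then have "card {x \<in> S. length x \<le> n} \<le> (\<Sum>l\<le>n. card {x \<in> S. length x = l})"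
    using card_UN_le[of "{..n}" "\<lambda>l. {x \<in> S. length x = l}"] by simp
  then have "real (card {x \<in> S. length x \<le> n}) \<le> real (\<Sum>l\<le>n. card {x \<in> S. length x = l})"
    by (simp only: of_nat_le_iff)
  then show ?thesis unfolding rho_def by (simp only: of_nat_sum)
qed

lemma rho_CR_pos: "0 < rho n (CR k)"
proof -
  have "finite {x \<in> CR k. length x \<le> n}"
    by (rule finite_subset[OF _ finite_FG_length_le[of k n]]) (auto simp: CR_def)
  moreover have "[] \<in> {x \<in> CR k. length x \<le> n}" by (simp add: CR_def FG_def)
  ultimately have "card {x \<in> CR k. length x \<le> n} \<noteq> 0"
    by (metis card_0_eq empty_iff)
  then show ?thesis by (simp add: rho_def)
qed

section \<open>Words overlapping a rotation of their image under inversion\<close>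

definition mirror_index :: "nat \<Rightarrow> nat \<Rightarrow> nat \<Rightarrow> nat" where
  "mirror_index l j i = l - Suc ((i + j) mod l)"

lemma nth_rotate_finv:
  assumes "i < length x"
  shows "rotate j (finv x) ! i = - x ! mirror_index (length x) j i"
proof -
  have "(i + j) mod length x < length x"
    by (rule mod_less_divisor) (use assms in linarith)
  with assms show ?thesis by (simp add: finv_def nth_rotate rev_nth mirror_index_def add.commute)
qed

lemma mirror_index_less: "0 < l \<Longrightarrow> mirror_index l j i < l"
  by (simp add: mirror_index_def)

lemma mirror_index_involutive:
  assumes "i < l"
  shows "mirror_index l j (mirror_index l j i) = i"
proof -
  define a where "a = (i + j) mod l"
  have "a < l" using assms by (simp add: a_def)
  have "l - Suc a + j = (l - Suc i) + (i + j) div l * l"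
    using div_mult_mod_eq[of "i + j" l] \<open>a < l\<close> assms unfolding a_def by linarith
  then have "(l - Suc a + j) mod l = (l - Suc i) mod l"
    by (simp only: mod_mult_self1)
  also have "\<dots> = l - Suc i" using assms by simp
  finally have "(l - Suc a + j) mod l = l - Suc i" .
  then show ?thesis using assms by (simp add: mirror_index_def a_def)
qed

lemma card_mirror_index_fixed_le: "card {i. i < l \<and> mirror_index l j i = i} \<le> 2"
proof -
  define j' where "j' = j mod l"
  have "{i. i < l \<and> mirror_index l j i = i} \<subseteq> {(l - 1 - j') div 2, (2 * l - 1 - j') div 2}"
  proof
    fix i assume "i \<in> {i. i < l \<and> mirror_index l j i = i}"
    then have "i < l" "mirror_index l j i = i" by simp_all
    then have "j' < l" "l - Suc ((i + j') mod l) = i"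
      by (simp_all add: j'_def mirror_index_def mod_add_right_eq)
    then show "i \<in> {(l - 1 - j') div 2, (2 * l - 1 - j') div 2}"
      using \<open>i < l\<close> by (cases "i + j' < l") (auto simp: le_mod_geq)
  qed
  then have "card {i. i < l \<and> mirror_index l j i = i}
      \<le> card {(l - 1 - j') div 2, (2 * l - 1 - j') div 2}"
    by (rule card_mono[rotated]) simp
  also have "\<dots> \<le> 2" by (simp add: card_insert_if)
  finally show ?thesis .
qed

lemma card_involution_pairs_ge:
  assumes r_less: "\<And>i. i < l \<Longrightarrow> r i < l" and r_r: "\<And>i. i < l \<Longrightarrow> r (r i) = i"
    and "m \<le> l"
  shows "m \<le> 2 * card {t. t < l \<and> r t < t \<and> (t < m \<or> r t < m)} + card {i. i < l \<and> r i = i}"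
proof -
  define D where "D = {t. t < l \<and> r t < t \<and> (t < m \<or> r t < m)}"
  define below where "below = {i. i < m \<and> r i < i}"
  define above where "above = {i. i < m \<and> i < r i}"
  define fixed where "fixed = {i. i < l \<and> r i = i}"
  have finD: "finite D" by (simp add: D_def)
  have "below \<subseteq> D" using \<open>m \<le> l\<close> by (auto simp: below_def D_def)
  then have card_below: "card below \<le> card D" by (rule card_mono[OF finD])
  have "inj_on r above"
    using \<open>m \<le> l\<close> r_r by (metis (mono_tags, lifting) above_def inj_onI mem_Collect_eq order_less_le_trans)
  moreover have "r ` above \<subseteq> D"
    using \<open>m \<le> l\<close> r_less r_r by (auto simp: above_def D_def)
  ultimately have card_above: "card above \<le> card D"
    by (metis card_image card_mono[OF finD])
  have "{..<m} \<subseteq> below \<union> above \<union> fixed"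
    using \<open>m \<le> l\<close> by (auto simp: below_def above_def fixed_def)
  then have "m \<le> card (below \<union> above \<union> fixed)"
    using card_mono[of "below \<union> above \<union> fixed" "{..<m}"]
    by (simp add: below_def above_def fixed_def)
  also have "\<dots> \<le> card below + card above + card fixed"
    by (meson add_mono_thms_linordered_semiring(3) card_Un_le order_trans)
  finally show ?thesis using card_below card_above by (simp add: D_def fixed_def)
qed

lemma nth_self_overlap:
  assumes "take m x = take m (rotate j (map \<pi> (finv x)))" and "i < m" and "i < length x"
  shows "x ! i = \<pi> (- x ! mirror_index (length x) j i)"
proof -
  have "x ! i = take m x ! i" using assms(2) by simp
  also have "\<dots> = map \<pi> (rotate j (finv x)) ! i"
    using assms(1,2) by (simp add: rotate_map)
  also have "\<dots> = \<pi> (- x ! mirror_index (length x) j i)"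
    using assms(3) by (simp add: finv_def nth_rotate_finv[OF assms(3), unfolded finv_def])
  finally show ?thesis .
qed

lemma self_overlapping_letter_determined:
  assumes \<pi>: "inj_on \<pi> (alph k)" and "m \<le> l" and "t < l" and "mirror_index l j t < t"
    and "t < m \<or> mirror_index l j t < m"
  shows "\<exists>f. \<forall>x\<in>{x \<in> FG k. length x = l \<and> take m x = take m (rotate j (map \<pi> (finv x)))}.
           x ! t = f (take t x)" (is "\<exists>f. \<forall>x\<in>?X. _")
proof -
  define r where "r = mirror_index l j"
  have overlap: "x ! i = \<pi> (- x ! r i)" if "x \<in> ?X" "i < m" for x i
    using that nth_self_overlap[of m x j \<pi> i] \<open>m \<le> l\<close> by (simp add: r_def)
  show ?thesis
  proof (cases "t < m")
    case True
    then have "\<forall>x\<in>?X. x ! t = \<pi> (- take t x ! r t)"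
      using overlap assms(4) by (simp add: r_def)
    then show ?thesis by (rule exI[where x = "\<lambda>u. \<pi> (- u ! r t)"])
  next
    case False
    then have "r t < m" "r t < t" using assms(4,5) by (simp_all add: r_def)
    have "x ! t = - inv_into (alph k) \<pi> (take t x ! r t)" if "x \<in> ?X" for x
    proof -
      have "x ! r t = \<pi> (- x ! t)"
        using overlap[OF that \<open>r t < m\<close>] mirror_index_involutive[OF \<open>t < l\<close>] by (simp add: r_def)
      moreover have "x ! t \<in> alph k"
        using that \<open>t < l\<close> nth_mem by (auto simp: FG_def)
      ultimately show ?thesis using \<open>r t < t\<close> \<pi> uminus_in_alph by (simp add: inv_into_f_f)
    qed
    then show ?thesis by (intro exI[where x = "\<lambda>u. - inv_into (alph k) \<pi> (u ! r t)"]) blast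
  qed
qed

lemma card_self_overlapping_words_le:
  assumes "k \<ge> 1" and \<pi>: "inj_on \<pi> (alph k)" and "m \<le> l"
  shows "real (card {x \<in> FG k. length x = l \<and> take m x = take m (rotate j (map \<pi> (finv x)))})
           * real (2 * k - 1) powr (real m / 2 - 1) \<le> 2 * real (2 * k - 1) ^ l"
proof -
  define X where "X = {x \<in> FG k. length x = l \<and> take m x = take m (rotate j (map \<pi> (finv x)))}"
  define r where "r = mirror_index l j"
  define D where "D = {t. t < l \<and> r t < t \<and> (t < m \<or> r t < m)}"
  define q where "q = 2 * k - 1"
  have "card X * q ^ card D \<le> 2 * q ^ l"
    unfolding q_def
  proof (rule card_reduced_words_determined[OF \<open>k \<ge> 1\<close>])
    show "\<exists>f. \<forall>x\<in>X. x ! t = f (take t x)" if "t \<in> D" for t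
      using that self_overlapping_letter_determined[OF \<pi> \<open>m \<le> l\<close>, of t j]
      by (simp add: D_def X_def r_def)
  qed (auto simp: X_def D_def)
  then have card_X: "real (card X) * real q ^ card D \<le> 2 * real q ^ l"
    by (metis of_nat_le_iff of_nat_mult of_nat_numeral of_nat_power)
  have "m \<le> 2 * card D + card {i. i < l \<and> r i = i}"
    unfolding D_def
    by (rule card_involution_pairs_ge) (simp_all add: r_def mirror_index_less mirror_index_involutive \<open>m \<le> l\<close>)
  then have "real m / 2 - 1 \<le> real (card D)"
    using card_mirror_index_fixed_le[of l j] unfolding r_def by linarith
  moreover have "1 \<le> real q" using \<open>k \<ge> 1\<close> by (simp add: q_def)
  ultimately have "real q powr (real m / 2 - 1) \<le> real q powr real (card D)"
    by (intro powr_mono)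
  also have "\<dots> = real q ^ card D"
    using \<open>1 \<le> real q\<close> by (simp add: powr_realpow)
  finally have "real (card X) * real q powr (real m / 2 - 1) \<le> real (card X) * real q ^ card D"
    by (rule mult_left_mono) simp
  with card_X show ?thesis by (simp add: X_def q_def)
qed

lemma Sprime_length_subset:
  assumes "0 < l" and \<tau>: "\<forall>x\<in>FG k. \<tau> x = map \<pi> x"
  shows "{x \<in> Sprime k lam \<tau>. length x = l} \<subseteq> (\<Union>j<l. {x \<in> FG k. length x = l \<and>
           take (nat \<lceil>lam * l\<rceil>) x = take (nat \<lceil>lam * l\<rceil>) (rotate j (map \<pi> (finv x)))})"
proof
  fix x assume "x \<in> {x \<in> Sprime k lam \<tau>. length x = l}"
  then obtain j m where x: "x \<in> CR k" "length x = l" and "lam * l \<le> real m"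
    and overlap: "take m x = take m (rotate j (\<tau> (finv x)))"
    unfolding Sprime_def by auto
  then have "nat \<lceil>lam * l\<rceil> \<le> m" by (simp add: nat_ceiling_le_eq)
  moreover have "\<tau> (finv x) = map \<pi> (finv x)"
    using \<tau> finv_in_FG x(1) by (simp add: CR_def)
  ultimately have "take (nat \<lceil>lam * l\<rceil>) x
      = take (nat \<lceil>lam * l\<rceil>) (rotate (j mod l) (map \<pi> (finv x)))"
    using overlap x(2) by (metis length_map length_finv min_def rotate_conv_mod take_take)
  then show "x \<in> (\<Union>j<l. {x \<in> FG k. length x = l \<and>
      take (nat \<lceil>lam * l\<rceil>) x = take (nat \<lceil>lam * l\<rceil>) (rotate j (map \<pi> (finv x)))})"
    using x \<open>0 < l\<close> by (auto simp: CR_def)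
qed

lemma card_Sprime_length_le:
  assumes "0 < l" and "k \<ge> 1" and "lam \<le> 1" and \<pi>: "inj_on \<pi> (alph k)"
    and \<tau>: "\<forall>x\<in>FG k. \<tau> x = map \<pi> x"
  shows "real (card {x \<in> Sprime k lam \<tau>. length x = l}) * real (2 * k - 1) powr (lam * l / 2)
           \<le> 2 * real l * real (2 * k - 1) ^ Suc l"
proof -
  define q where "q = real (2 * k - 1)"
  define m where "m = nat \<lceil>lam * l\<rceil>"
  define X where "X j = {x \<in> FG k. length x = l \<and> take m x = take m (rotate j (map \<pi> (finv x)))}" for j
  have "lam * l \<le> l" using \<open>lam \<le> 1\<close> mult_right_mono[of lam 1 "real l"] by simp
  then have "m \<le> l" by (simp add: m_def nat_ceiling_le_eq)
  have q: "1 \<le> q" using \<open>k \<ge> 1\<close> by (simp add: q_def)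
  have "card {x \<in> Sprime k lam \<tau>. length x = l} \<le> (\<Sum>j<l. card (X j))"
    using Sprime_length_subset[OF \<open>0 < l\<close> \<tau>, of lam] unfolding X_def[abs_def] m_def
    by (intro card_UN_le[THEN order_trans[rotated]] card_mono)
      (auto intro: finite_subset_FG_length)
  then have "real (card {x \<in> Sprime k lam \<tau>. length x = l}) * q powr (lam * l / 2)
      \<le> (\<Sum>j<l. real (card (X j)) * q powr (lam * l / 2))"
    by (simp add: mult_right_mono flip: sum_distrib_right of_nat_sum)
  also have "\<dots> \<le> (\<Sum>j<l. 2 * q ^ Suc l)"
  proof (rule sum_mono)
    fix j
    have "lam * l \<le> real m" by (simp add: m_def) linarith
    then have "q powr (lam * l / 2) \<le> q powr (real m / 2)"
      using q by (intro powr_mono) auto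
    also have "\<dots> = q * q powr (real m / 2 - 1)"
      using q by (simp add: powr_diff)
    finally have "real (card (X j)) * q powr (lam * l / 2)
        \<le> q * (real (card (X j)) * q powr (real m / 2 - 1))"
      by (metis mult_left_mono of_nat_0_le_iff mult.left_commute)
    also have "\<dots> \<le> q * (2 * q ^ l)"
      using card_self_overlapping_words_le[OF \<open>k \<ge> 1\<close> \<pi> \<open>m \<le> l\<close>, of j] q
      by (intro mult_left_mono) (simp_all add: X_def q_def)
    finally show "real (card (X j)) * q powr (lam * l / 2) \<le> 2 * q ^ Suc l"
      by (simp add: mult.left_commute)
  qed
  finally show ?thesis by (simp add: q_def)
qed

lemma card_Sprime_length_le_power:
  assumes "k \<ge> 2" and "lam \<le> 1" and \<pi>: "inj_on \<pi> (alph k)"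
    and \<tau>: "\<forall>x\<in>FG k. \<tau> x = map \<pi> x" and "l \<le> n"
  shows "real (card {x \<in> Sprime k lam \<tau>. length x = l})
           \<le> 2 * real (2 * k - 1) * (real n + 1) * (real (2 * k - 1) * real (2 * k - 1) powr (- lam / 2)) ^ n"
proof -
  define q where "q = real (2 * k - 1)"
  define \<beta> where "\<beta> = q powr (- lam / 2)"
  have q: "3 \<le> q" using assms(1) by (simp add: q_def)
  have "1 \<le> q * \<beta>"
  proof -
    have "q powr (1 + - lam / 2) = q powr 1 * q powr (- lam / 2)" by (rule powr_add)
    then have "q * \<beta> = q powr (1 + - lam / 2)" using q by (simp add: \<beta>_def)
    moreover have "1 \<le> q powr (1 + - lam / 2)"
      using q assms(2) by (intro ge_one_powr_ge_zero) simp_all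
    ultimately show ?thesis by simp
  qed
  have "real (card {x \<in> Sprime k lam \<tau>. length x = l}) \<le> 2 * q * (real n + 1) * (q * \<beta>) ^ n"
  proof (cases "l = 0")
    case True
    have "card {x \<in> Sprime k lam \<tau>. length x = l} \<le> card {[] :: int list}"
      using True by (intro card_mono) auto
    moreover have "1 \<le> 2 * q * (real n + 1)"
      using q mult_mono[of 1 "2 * q" 1 "real n + 1"] by simp
    then have "1 * 1 \<le> (2 * q * (real n + 1)) * (q * \<beta>) ^ n"
      using \<open>1 \<le> q * \<beta>\<close> by (intro mult_mono one_le_power) auto
    ultimately show ?thesis by simp
  next
    case False
    have "\<beta> ^ l = q powr (- (lam * l / 2))"
      using q by (simp add: \<beta>_def powr_powr flip: powr_realpow)
    then have cancel: "q powr (lam * l / 2) * \<beta> ^ l = 1"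
      using q by (simp flip: powr_add)
    have "real (card {x \<in> Sprime k lam \<tau>. length x = l})
        = real (card {x \<in> Sprime k lam \<tau>. length x = l}) * q powr (lam * l / 2) * \<beta> ^ l"
      by (simp add: cancel mult.assoc)
    also have "\<dots> \<le> 2 * real l * q ^ Suc l * \<beta> ^ l"
      using card_Sprime_length_le[of l k lam \<pi> \<tau>] False assms \<beta>_def
      by (intro mult_right_mono) (simp_all add: q_def)
    also have "\<dots> = 2 * q * real l * (q * \<beta>) ^ l"
      by (simp add: power_mult_distrib)
    also have "\<dots> \<le> 2 * q * (real n + 1) * (q * \<beta>) ^ n"
      using q \<open>l \<le> n\<close> \<open>1 \<le> q * \<beta>\<close>
      by (intro mult_mono power_increasing) auto
    finally show ?thesis .
  qed
  then show ?thesis unfolding q_def \<beta>_def .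
qed

lemma rho_Sprime_le:
  assumes "k \<ge> 2" and "lam \<le> 1" and "relabeling_aut k \<tau>"
  shows "rho n (Sprime k lam \<tau>) \<le> 2 * real (2 * k - 1) ^ 3 * (real n + 1) ^ 2
           * (real (2 * k - 1) powr (- lam / 2)) ^ n * rho n (CR k)"
proof -
  obtain \<pi> where \<pi>: "bij_betw \<pi> (alph k) (alph k)" and \<tau>: "\<forall>x\<in>FG k. \<tau> x = map \<pi> x"
    using relabeling_aut_letterwise[OF assms(3)] by blast
  define q where "q = real (2 * k - 1)"
  define \<beta> where "\<beta> = q powr (- lam / 2)"
  have "rho n (Sprime k lam \<tau>) \<le> (\<Sum>l\<le>n. real (card {x \<in> Sprime k lam \<tau>. length x = l}))"
    by (rule rho_le_sum_card_length)
  also have "\<dots> \<le> (\<Sum>l\<le>n. 2 * q * (real n + 1) * (q * \<beta>) ^ n)"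
    using card_Sprime_length_le_power[OF assms(1,2) _ \<tau>] \<pi>
    by (intro sum_mono) (simp add: q_def \<beta>_def bij_betw_def)
  also have "\<dots> = 2 * q * (real n + 1) ^ 2 * \<beta> ^ n * q ^ n"
    by (simp add: power2_eq_square power_mult_distrib)
  also have "\<dots> \<le> 2 * q * (real n + 1) ^ 2 * \<beta> ^ n * (q ^ 2 * rho n (CR k))"
  proof (rule mult_left_mono)
    show "q ^ n \<le> q ^ 2 * rho n (CR k)" using rho_CR_ge[OF assms(1), of n] by (simp add: q_def)
    show "0 \<le> 2 * q * (real n + 1) ^ 2 * \<beta> ^ n" by (simp add: q_def \<beta>_def)
  qed
  also have "\<dots> = 2 * q ^ 3 * (real n + 1) ^ 2 * \<beta> ^ n * rho n (CR k)"
    by (simp add: power2_eq_square power3_eq_cube)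
  finally show ?thesis unfolding q_def \<beta>_def .
qed

lemma linear_times_power_le:
  fixes \<beta> \<sigma> :: real
  assumes "0 \<le> \<beta>" and "\<beta> < \<sigma>"
  obtains K where "\<And>n. (real n + 1) * \<beta> ^ n \<le> K * \<sigma> ^ n"
proof -
  define \<epsilon> where "\<epsilon> = \<beta> / \<sigma>"
  have \<epsilon>: "0 \<le> \<epsilon>" "\<epsilon> < 1" using assms by (simp_all add: \<epsilon>_def)
  have "(\<lambda>n. real n * \<epsilon> ^ n + \<epsilon> ^ n) \<longlonglongrightarrow> 0 + 0"
    using \<epsilon> by (intro tendsto_add powser_times_n_limit_0 LIMSEQ_power_zero) simp_all
  then have "Bseq (\<lambda>n. (real n + 1) * \<epsilon> ^ n)"
    by (simp add: distrib_right convergent_imp_Bseq convergentI)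
  then obtain K where "\<forall>n. norm ((real n + 1) * \<epsilon> ^ n) \<le> K"
    by (auto elim: BseqE)
  then have K: "(real n + 1) * \<epsilon> ^ n \<le> K" for n
    using abs_le_D1 by auto
  have "(real n + 1) * \<beta> ^ n \<le> K * \<sigma> ^ n" for n
  proof -
    have "\<beta> ^ n = \<epsilon> ^ n * \<sigma> ^ n" using assms by (simp add: \<epsilon>_def power_divide)
    then show ?thesis using K[of n] assms by (simp add: mult.assoc[symmetric] mult_right_mono)
  qed
  then show ?thesis by (rule that)
qed

lemma quadratic_times_power_le:
  fixes \<beta> \<sigma> :: real
  assumes "0 \<le> \<beta>" and "\<beta> < \<sigma>"
  obtains K where "\<And>n. (real n + 1) ^ 2 * \<beta> ^ n \<le> K * \<sigma> ^ n"
proof -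
  define \<rho> where "\<rho> = (\<beta> + \<sigma>) / 2"
  have "0 \<le> \<rho>" "\<beta> < \<rho>" "\<rho> < \<sigma>" using assms by (simp_all add: \<rho>_def)
  obtain K1 where K1: "\<And>n. (real n + 1) * \<beta> ^ n \<le> K1 * \<rho> ^ n"
    using linear_times_power_le[OF assms(1) \<open>\<beta> < \<rho>\<close>] by blast
  obtain K2 where K2: "\<And>n. (real n + 1) * \<rho> ^ n \<le> K2 * \<sigma> ^ n"
    using linear_times_power_le[OF \<open>0 \<le> \<rho>\<close> \<open>\<rho> < \<sigma>\<close>] by blast
  have "0 \<le> K1" using K1[of 0] by simp
  have "(real n + 1) ^ 2 * \<beta> ^ n \<le> K1 * K2 * \<sigma> ^ n" for n
  proof -
    have "(real n + 1) ^ 2 * \<beta> ^ n = (real n + 1) * ((real n + 1) * \<beta> ^ n)"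
      by (simp add: power2_eq_square)
    also have "\<dots> \<le> K1 * ((real n + 1) * \<rho> ^ n)"
      using mult_left_mono[OF K1[of n], of "real n + 1"] by (simp add: mult.left_commute)
    also have "\<dots> \<le> K1 * (K2 * \<sigma> ^ n)"
      by (rule mult_left_mono[OF K2 \<open>0 \<le> K1\<close>])
    finally show ?thesis by simp
  qed
  then show ?thesis by (rule that)
qed

lemma exp_negligible_if_rho_le:
  assumes "S \<subseteq> Q" and Q: "\<And>n. 0 < rho n Q" and "0 < C" "0 < \<sigma>" "\<sigma> < 1"
    and S: "\<And>n. rho n S \<le> C * \<sigma> ^ n * rho n Q"
  shows "exp_negligible S Q"
proof -
  have "\<bar>rho n (Q - S) / rho n Q - 1\<bar> \<le> C * \<sigma> ^ n" for n
  proof -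
    have fin: "finite {x \<in> Q. length x \<le> n}"
    proof (rule ccontr)
      assume "infinite {x \<in> Q. length x \<le> n}"
      then have "rho n Q = 0" by (simp add: rho_def)
      with Q[of n] show False by simp
    qed
    have sub: "{x \<in> S. length x \<le> n} \<subseteq> {x \<in> Q. length x \<le> n}" using \<open>S \<subseteq> Q\<close> by auto
    have "{x \<in> Q - S. length x \<le> n} = {x \<in> Q. length x \<le> n} - {x \<in> S. length x \<le> n}"
      by auto
    then have "card {x \<in> Q - S. length x \<le> n} = card {x \<in> Q. length x \<le> n} - card {x \<in> S. length x \<le> n}"
      using card_Diff_subset[OF finite_subset[OF sub fin] sub] by simp
    then have "rho n (Q - S) = rho n Q - rho n S"
      unfolding rho_def using card_mono[OF fin sub] by (simp add: of_nat_diff)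
    then have "\<bar>rho n (Q - S) / rho n Q - 1\<bar> = rho n S / rho n Q"
      using Q[of n] by (simp add: diff_divide_distrib rho_def)
    also have "\<dots> \<le> C * \<sigma> ^ n"
      using S[of n] Q[of n] by (simp add: divide_le_eq)
    finally show ?thesis .
  qed
  then show ?thesis
    using assms(1,3-5) by (auto simp: exp_negligible_def exp_generic_def)
qed

lemma exp_negligible_if_rho_le_quadratic_power:
  fixes \<beta> :: real
  assumes "S \<subseteq> Q" and "\<And>n. 0 < rho n Q" and "0 \<le> \<beta>" "\<beta> < 1"
    and S: "\<And>n. rho n S \<le> C * (real n + 1) ^ 2 * \<beta> ^ n * rho n Q"
  shows "exp_negligible S Q"
proof -
  define \<sigma> where "\<sigma> = (1 + \<beta>) / 2"
  have \<sigma>: "0 < \<sigma>" "\<beta> < \<sigma>" "\<sigma> < 1" using assms(3,4) by (simp_all add: \<sigma>_def)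
  obtain K where K: "\<And>n. (real n + 1) ^ 2 * \<beta> ^ n \<le> K * \<sigma> ^ n"
    using quadratic_times_power_le[OF \<open>0 \<le> \<beta>\<close> \<open>\<beta> < \<sigma>\<close>] by blast
  define C' where "C' = max 1 (C * K)"
  have bound: "rho n S \<le> C' * \<sigma> ^ n * rho n Q" for n
  proof -
    have "0 \<le> rho 0 S" by (simp add: rho_def)
    then have "0 \<le> C * rho 0 Q" using S[of 0] by simp
    then have "0 \<le> C" using assms(2)[of 0] by (simp add: zero_le_mult_iff)
    have "rho n S \<le> C * ((real n + 1) ^ 2 * \<beta> ^ n) * rho n Q"
      using S[of n] by (simp add: mult.assoc)
    also have "\<dots> \<le> C * (K * \<sigma> ^ n) * rho n Q"
      using K[of n] \<open>0 \<le> C\<close> assms(2)[of n] by (intro mult_right_mono mult_left_mono) auto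
    also have "\<dots> = (C * K) * (\<sigma> ^ n * rho n Q)" by (simp add: mult_ac)
    also have "\<dots> \<le> C' * (\<sigma> ^ n * rho n Q)"
      using \<sigma>(1) assms(2)[of n] by (intro mult_right_mono) (auto simp: C'_def)
    finally show ?thesis by (simp add: mult_ac)
  qed
  have "0 < C'" by (simp add: C'_def)
  from exp_negligible_if_rho_le[OF assms(1,2) this \<sigma>(1,3) bound] show ?thesis .
qed

theorem lemma4p6:
  fixes k :: nat and lam :: real and \<tau> :: "int list \<Rightarrow> int list"
  assumes "k > 1"
    and "0 < lam" and "lam < 1/3"
    and "relabeling_aut k \<tau>"
    and "\<exists>x\<in>FG k. \<tau> x \<noteq> x"
  shows "exp_negligible (Sprime k lam \<tau>) (CR k)"
proof -
  have "k \<ge> 2" and "lam \<le> 1" using assms(1,3) by simp_all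
  define \<beta> where "\<beta> = real (2 * k - 1) powr (- lam / 2)"
  have "0 \<le> \<beta>" and "\<beta> < 1"
    using \<open>k \<ge> 2\<close> assms(2) by (simp_all add: \<beta>_def powr_less_one)
  have "Sprime k lam \<tau> \<subseteq> CR k" by (auto simp: Sprime_def)
  then show ?thesis
    using rho_CR_pos \<open>0 \<le> \<beta>\<close> \<open>\<beta> < 1\<close>
      rho_Sprime_le[OF \<open>k \<ge> 2\<close> \<open>lam \<le> 1\<close> assms(4), folded \<beta>_def]
    by (rule exp_negligible_if_rho_le_quadratic_power)
qed

end
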